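(* Let $P \in S$ have degree $n \geq 1$ in $x$, and suppose that the degree in $x$ of every nonzero element of $C_S(P)$ is divisible by $n$. Then $C_S(P) = K[P]$.
   Context: Standing conventions: $K$ is a field, $R = K[y]$, $\sigma$ is a $K$-algebra endomorphism of $R$ with $\deg_y(\sigma(y)) > 1$, and $\delta$ is a $K$-linear $\sigma$-derivation of $R$ ($\delta(ab) = \sigma(a)\delta(b) + \delta(a)b$). $S = R[x;\sigma,\delta]$ is the Ore extension (polynomials $\sum r_i x^i$, $r_i\in R$, with $xr = \sigma(r)x + \delta(r)$). $C_S(P)$ is the centralizer of $P$ in $S$, and $K[P] = \{\sum_i c_i P^i : c_i \in K\}$. *)

theory Defs
  imports "HOL-Computational_Algebra.Polynomial"
begin

text \<open>Elements of the Ore extension S = R[x; sigma, delta], R = K[y], are represented as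
  polynomials in x with coefficients in R, i.e. of type 'k poly poly:
  the element sum r_i x^i has coeff i = r_i.  Degree in x is the outer degree.\<close>

text \<open>Left multiplication by x:  x (r x^i) = sigma(r) x^(i+1) + delta(r) x^i.\<close>
definition ore_x :: "('k::field poly \<Rightarrow> 'k poly) \<Rightarrow> ('k poly \<Rightarrow> 'k poly)
    \<Rightarrow> 'k poly poly \<Rightarrow> 'k poly poly" where
  "ore_x \<sigma> \<delta> f = pCons 0 (map_poly \<sigma> f) + map_poly \<delta> f"

definition ore_mult :: "('k::field poly \<Rightarrow> 'k poly) \<Rightarrow> ('k poly \<Rightarrow> 'k poly)
    \<Rightarrow> 'k poly poly \<Rightarrow> 'k poly poly \<Rightarrow> 'k poly poly" where
  "ore_mult \<sigma> \<delta> f g = (\<Sum>i\<le>degree f. smult (coeff f i) ((ore_x \<sigma> \<delta> ^^ i) g))"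

primrec ore_pow :: "('k::field poly \<Rightarrow> 'k poly) \<Rightarrow> ('k poly \<Rightarrow> 'k poly)
    \<Rightarrow> 'k poly poly \<Rightarrow> nat \<Rightarrow> 'k poly poly" where
  "ore_pow \<sigma> \<delta> P 0 = 1"
| "ore_pow \<sigma> \<delta> P (Suc n) = ore_mult \<sigma> \<delta> P (ore_pow \<sigma> \<delta> P n)"

definition K_alg_endo :: "('k::field poly \<Rightarrow> 'k poly) \<Rightarrow> bool" where
  "K_alg_endo \<sigma> \<longleftrightarrow> (\<forall>a b. \<sigma> (a + b) = \<sigma> a + \<sigma> b) \<and> (\<forall>a b. \<sigma> (a * b) = \<sigma> a * \<sigma> b)
     \<and> \<sigma> 1 = 1 \<and> (\<forall>c a. \<sigma> (smult c a) = smult c (\<sigma> a))"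

definition K_sigma_derivation :: "('k::field poly \<Rightarrow> 'k poly) \<Rightarrow> ('k poly \<Rightarrow> 'k poly) \<Rightarrow> bool" where
  "K_sigma_derivation \<sigma> \<delta> \<longleftrightarrow> (\<forall>a b. \<delta> (a + b) = \<delta> a + \<delta> b)
     \<and> (\<forall>c a. \<delta> (smult c a) = smult c (\<delta> a))
     \<and> (\<forall>a b. \<delta> (a * b) = \<sigma> a * \<delta> b + \<delta> a * b)"

definition centralizer :: "('k::field poly \<Rightarrow> 'k poly) \<Rightarrow> ('k poly \<Rightarrow> 'k poly)
    \<Rightarrow> 'k poly poly \<Rightarrow> 'k poly poly set" where
  "centralizer \<sigma> \<delta> P = {Q. ore_mult \<sigma> \<delta> Q P = ore_mult \<sigma> \<delta> P Q}"

text \<open>K[P] = { sum_i c_i P^i : c_i in K }; a scalar c in K is the element [:[:c:]:] of S,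
  and c * P^i = smult [:c:] P^i.\<close>
definition K_poly_in :: "('k::field poly \<Rightarrow> 'k poly) \<Rightarrow> ('k poly \<Rightarrow> 'k poly)
    \<Rightarrow> 'k poly poly \<Rightarrow> 'k poly poly set" where
  "K_poly_in \<sigma> \<delta> P = {Q. \<exists>(c::nat \<Rightarrow> 'k) N. Q = (\<Sum>i\<le>N. smult [:c i:] (ore_pow \<sigma> \<delta> P i))}"

end

theory Submission
  imports Defs
begin

text \<open>
  If \<open>Q\<close> commutes with \<open>P\<close> and has \<open>x\<close>-degree \<open>m\<close>, comparing the coefficients of \<open>x\<^sup>n\<^sup>+\<^sup>m\<close>
  in \<open>QP = PQ\<close> gives \<open>lc(P) \<sigma>\<^sup>n(lc Q) = lc(Q) \<sigma>\<^sup>m(lc P)\<close>. Since \<open>\<sigma>\<close> multiplies \<open>y\<close>-degrees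
  by \<open>d = deg \<sigma>(y) > 1\<close>, this equation fixes the \<open>y\<close>-degree of \<open>lc Q\<close>, so any two nonzero
  solutions have a difference of smaller degree that is again a solution, i.e. they are
  proportional over \<open>K\<close>. By hypothesis \<open>m = kn\<close>, so \<open>P\<^sup>k\<close> lies in the centralizer with the
  same \<open>x\<close>-degree as \<open>Q\<close>; subtracting a scalar multiple of \<open>P\<^sup>k\<close> lowers the degree of \<open>Q\<close>,
  and induction on the degree finishes the proof.
\<close>

lemma smult_sum_right: "smult a (\<Sum>i\<in>A. f i) = (\<Sum>i\<in>A. smult a (f i))"
  by (induction A rule: infinite_finite_induct) (auto simp: smult_add_right)

lemma linear_nat_solution_unique:
  fixes e x y a b :: nat
  assumes "e > 1" "a + e * x = x + b" "a + e * y = y + b"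
  shows "x = y"
proof -
  have "e * x + y = e * y + x" using assms(2,3) by linarith
  then have "(e - 1) * x = (e - 1) * y"
    by (simp add: diff_mult_distrib)
  then show ?thesis using assms(1) by simp
qed

locale ore_extension =
  fixes \<sigma> \<delta> :: "'k::field poly \<Rightarrow> 'k poly"
  assumes endo: "K_alg_endo \<sigma>"
    and derivation: "K_sigma_derivation \<sigma> \<delta>"
    and sigma_y_nonconstant: "degree (\<sigma> [:0, 1:]) > 0"
begin

lemma sigma_add: "\<sigma> (a + b) = \<sigma> a + \<sigma> b"
  and sigma_mult: "\<sigma> (a * b) = \<sigma> a * \<sigma> b"
  and sigma_1: "\<sigma> 1 = 1"
  and sigma_smult: "\<sigma> (smult c a) = smult c (\<sigma> a)"
  using endo by (simp_all add: K_alg_endo_def)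

lemma delta_add: "\<delta> (a + b) = \<delta> a + \<delta> b"
  and delta_smult: "\<delta> (smult c a) = smult c (\<delta> a)"
  and delta_mult: "\<delta> (a * b) = \<sigma> a * \<delta> b + \<delta> a * b"
  using derivation by (simp_all add: K_sigma_derivation_def)

lemma sigma_eq_pcompose: "\<sigma> r = pcompose r (\<sigma> [:0, 1:])"
proof (induction r)
  case (pCons a p)
  have "pCons a p = smult a 1 + [:0, 1:] * p"
    by simp
  then have "\<sigma> (pCons a p) = smult a (\<sigma> 1) + \<sigma> [:0, 1:] * \<sigma> p"
    by (simp only: sigma_add sigma_mult sigma_smult)
  then show ?case
    using pCons by (simp add: pcompose_pCons sigma_1)
qed (simp add: sigma_smult[of 0 0, simplified])

lemma sigma_0 [simp]: "\<sigma> 0 = 0"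
  and sigma_const [simp]: "\<sigma> [:c:] = [:c:]"
  and sigma_diff: "\<sigma> (a - b) = \<sigma> a - \<sigma> b"
  by (simp_all add: sigma_eq_pcompose[of 0] sigma_eq_pcompose[of "[:c:]"]
      sigma_eq_pcompose[of "a - b"] sigma_eq_pcompose[of a] sigma_eq_pcompose[of b] pcompose_diff)

lemma delta_0 [simp]: "\<delta> 0 = 0"
  using delta_smult[of 0 0] by simp

lemma delta_1: "\<delta> 1 = 0"
proof -
  have "\<delta> 1 = \<delta> 1 + \<delta> 1"
    using delta_mult[of 1 1] by (simp add: sigma_1)
  then show ?thesis
    by (metis add_cancel_right_right)
qed

lemma delta_const [simp]: "\<delta> [:c:] = 0"
  using delta_smult[of c 1] by (simp add: delta_1)

lemma delta_diff: "\<delta> (a - b) = \<delta> a - \<delta> b"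
  using delta_add[of "a - b" b] by simp

lemma degree_funpow_sigma:
  "degree ((\<sigma> ^^ i) r) = degree (\<sigma> [:0, 1:]) ^ i * degree r"
  by (induction i) (simp_all add: sigma_eq_pcompose[of "(\<sigma> ^^ _) r"] degree_pcompose)

lemma funpow_sigma_eq_0_iff [simp]: "(\<sigma> ^^ i) r = 0 \<longleftrightarrow> r = 0"
  by (induction i) (simp_all add: sigma_eq_pcompose[of "(\<sigma> ^^ _) r"]
      pcompose_eq_0_iff[OF sigma_y_nonconstant])

lemma funpow_sigma_diff: "(\<sigma> ^^ i) (a - b) = (\<sigma> ^^ i) a - (\<sigma> ^^ i) b"
  by (induction i) (simp_all add: sigma_diff)

lemma funpow_sigma_smult: "(\<sigma> ^^ i) (smult c a) = smult c ((\<sigma> ^^ i) a)"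
  by (induction i) (simp_all add: sigma_smult)

abbreviation x_times :: "'k poly poly \<Rightarrow> 'k poly poly"
  where "x_times \<equiv> ore_x \<sigma> \<delta>"

abbreviation ore_times :: "'k poly poly \<Rightarrow> 'k poly poly \<Rightarrow> 'k poly poly" (infixl "\<star>" 70)
  where "f \<star> g \<equiv> ore_mult \<sigma> \<delta> f g"

abbreviation ore_power :: "'k poly poly \<Rightarrow> nat \<Rightarrow> 'k poly poly" (infixr "^\<star>" 80)
  where "P ^\<star> k \<equiv> ore_pow \<sigma> \<delta> P k"

lemma coeff_x_times:
  "coeff (x_times h) j = (if j = 0 then 0 else \<sigma> (coeff h (j - 1))) + \<delta> (coeff h j)"
  by (cases j) (simp_all add: ore_x_def coeff_map_poly)

lemma x_times_0 [simp]: "x_times 0 = 0"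
  by (rule poly_eqI) (simp add: coeff_x_times)

lemma x_times_add: "x_times (a + b) = x_times a + x_times b"
  by (rule poly_eqI) (simp add: coeff_x_times sigma_add delta_add)

lemma x_times_diff: "x_times (a - b) = x_times a - x_times b"
  by (rule poly_eqI) (simp add: coeff_x_times sigma_diff delta_diff)

lemma x_times_sum: "x_times (\<Sum>i\<in>A. F i) = (\<Sum>i\<in>A. x_times (F i))"
  by (induction A rule: infinite_finite_induct) (simp_all add: x_times_add)

lemma x_times_smult: "x_times (smult r h) = smult (\<sigma> r) (x_times h) + smult (\<delta> r) h"
  by (rule poly_eqI) (simp add: coeff_x_times sigma_mult delta_mult algebra_simps)

lemma funpow_x_times_0 [simp]: "(x_times ^^ i) 0 = 0"
  by (induction i) simp_all

lemma funpow_x_times_add: "(x_times ^^ i) (a + b) = (x_times ^^ i) a + (x_times ^^ i) b"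
  by (induction i) (simp_all add: x_times_add)

lemma funpow_x_times_diff: "(x_times ^^ i) (a - b) = (x_times ^^ i) a - (x_times ^^ i) b"
  by (induction i) (simp_all add: x_times_diff)

lemma funpow_x_times_const:
  "(x_times ^^ i) (smult [:c:] h) = smult [:c:] ((x_times ^^ i) h)"
  by (induction i) (simp_all add: x_times_smult)

lemma funpow_x_times_1: "(x_times ^^ i) 1 = monom 1 i"
proof (induction i)
  case (Suc i)
  have "x_times (monom 1 i) = monom 1 (Suc i)"
    by (rule poly_eqI) (auto simp: coeff_x_times coeff_monom sigma_1 delta_1)
  then show ?case
    using Suc by simp
qed (simp add: monom_0 one_pCons)

lemma funpow_x_times_top:
  assumes "\<forall>j>N. coeff h j = 0"
  shows "(\<forall>j>N + i. coeff ((x_times ^^ i) h) j = 0)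
    \<and> coeff ((x_times ^^ i) h) (N + i) = (\<sigma> ^^ i) (coeff h N)"
  by (induction i) (use assms in \<open>auto simp: coeff_x_times\<close>)

lemma ore_mult_eq_sum_lessThan:
  "degree f < N \<Longrightarrow> f \<star> g = (\<Sum>i<N. smult (coeff f i) ((x_times ^^ i) g))"
  unfolding ore_mult_def
  by (rule sum.mono_neutral_left) (auto simp: coeff_eq_0)

lemma ore_mult_0_left [simp]: "0 \<star> g = 0"
  by (simp add: ore_mult_def)

lemma ore_mult_1_left: "1 \<star> g = g"
  by (simp add: ore_mult_def)

lemma ore_mult_0_right [simp]: "f \<star> 0 = 0"
  by (simp add: ore_mult_def)

lemma ore_mult_1_right: "f \<star> 1 = f"
  by (simp add: ore_mult_def funpow_x_times_1 smult_monom poly_as_sum_of_monoms)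

lemma ore_mult_add_left: "(f1 + f2) \<star> g = f1 \<star> g + f2 \<star> g"
proof -
  define N where "N = Suc (max (degree f1) (degree f2))"
  have "degree (f1 + f2) < N"
    using degree_add_le_max[of f1 f2] by (simp add: N_def)
  then show ?thesis
    using ore_mult_eq_sum_lessThan[of f1 N] ore_mult_eq_sum_lessThan[of f2 N]
      ore_mult_eq_sum_lessThan[of "f1 + f2" N]
    by (simp add: N_def smult_add_left sum.distrib)
qed

lemma ore_mult_diff_left: "(f1 - f2) \<star> g = f1 \<star> g - f2 \<star> g"
  using ore_mult_add_left[of "f1 - f2" f2 g] by simp

lemma ore_mult_sum_left: "(\<Sum>i\<in>A. F i) \<star> g = (\<Sum>i\<in>A. F i \<star> g)"
  by (induction A rule: infinite_finite_induct) (simp_all add: ore_mult_add_left)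

lemma ore_mult_smult_left: "smult r f \<star> g = smult r (f \<star> g)"
proof -
  have "degree (smult r f) < Suc (degree f)"
    using degree_smult_le[of r f] by simp
  then show ?thesis
    using ore_mult_eq_sum_lessThan[of f "Suc (degree f)"]
      ore_mult_eq_sum_lessThan[of "smult r f" "Suc (degree f)"]
    by (simp add: smult_sum_right del: sum.lessThan_Suc)
qed

lemma ore_mult_add_right: "f \<star> (g1 + g2) = f \<star> g1 + f \<star> g2"
  by (simp add: ore_mult_def funpow_x_times_add smult_add_right sum.distrib)

lemma ore_mult_diff_right: "f \<star> (g1 - g2) = f \<star> g1 - f \<star> g2"
  by (simp add: ore_mult_def funpow_x_times_diff smult_diff_right sum_subtractf)

lemma ore_mult_sum_right: "f \<star> (\<Sum>i\<in>A. F i) = (\<Sum>i\<in>A. f \<star> F i)"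
  by (induction A rule: infinite_finite_induct) (simp_all add: ore_mult_add_right)

lemma ore_mult_const_right: "f \<star> smult [:c:] g = smult [:c:] (f \<star> g)"
  by (simp add: ore_mult_def funpow_x_times_const smult_sum_right mult.commute)

lemma ore_mult_x_times_left: "x_times g \<star> h = x_times (g \<star> h)"
proof -
  define N where "N = Suc (Suc (degree g))"
  have "degree (x_times g) < N"
    by (rule le_less_trans[OF degree_le[of "Suc (degree g)"]])
      (auto simp: N_def coeff_x_times coeff_eq_0)
  then have "x_times g \<star> h = (\<Sum>j<N. smult (coeff (x_times g) j) ((x_times ^^ j) h))"
    by (rule ore_mult_eq_sum_lessThan)
  also have "\<dots> = (\<Sum>j<N. smult (if j = 0 then 0 else \<sigma> (coeff g (j - 1))) ((x_times ^^ j) h))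
      + (\<Sum>j<N. smult (\<delta> (coeff g j)) ((x_times ^^ j) h))"
    by (simp only: coeff_x_times smult_add_left sum.distrib)
  also have "(\<Sum>j<N. smult (if j = 0 then 0 else \<sigma> (coeff g (j - 1))) ((x_times ^^ j) h))
      = (\<Sum>i<Suc (degree g). smult (\<sigma> (coeff g i)) ((x_times ^^ Suc i) h))"
    unfolding N_def by (simp only: sum.lessThan_Suc_shift) simp
  also have "\<dots> = (\<Sum>i<N. smult (\<sigma> (coeff g i)) ((x_times ^^ Suc i) h))"
    by (simp add: N_def coeff_eq_0 del: funpow.simps)
  also have "\<dots> + (\<Sum>j<N. smult (\<delta> (coeff g j)) ((x_times ^^ j) h))
      = x_times (\<Sum>i<N. smult (coeff g i) ((x_times ^^ i) h))"
    by (simp add: x_times_sum x_times_smult sum.distrib)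
  also have "(\<Sum>i<N. smult (coeff g i) ((x_times ^^ i) h)) = g \<star> h"
    by (rule ore_mult_eq_sum_lessThan[symmetric]) (simp add: N_def)
  finally show ?thesis .
qed

lemma ore_mult_assoc: "(f \<star> g) \<star> h = f \<star> (g \<star> h)"
proof -
  have funpow_left: "(x_times ^^ i) g \<star> h = (x_times ^^ i) (g \<star> h)" for i
    by (induction i) (simp_all add: ore_mult_x_times_left)
  show ?thesis
    unfolding ore_mult_def[of _ _ f g] ore_mult_def[of _ _ f "g \<star> h"]
    by (simp add: ore_mult_sum_left ore_mult_smult_left funpow_left)
qed

lemma coeff_ore_mult_above:
  "j > degree f + degree g \<Longrightarrow> coeff (f \<star> g) j = 0"
  using funpow_x_times_top[of "degree g" g] coeff_eq_0[of g]
  by (auto simp: ore_mult_def coeff_sum intro!: sum.neutral)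

lemma coeff_ore_mult_top:
  "coeff (f \<star> g) (degree f + degree g) = lead_coeff f * (\<sigma> ^^ degree f) (lead_coeff g)"
proof -
  note top = funpow_x_times_top[of "degree g" g]
  have "coeff (f \<star> g) (degree f + degree g)
      = (\<Sum>i\<le>degree f. coeff f i * coeff ((x_times ^^ i) g) (degree g + degree f))"
    by (simp add: ore_mult_def coeff_sum add.commute)
  also have "\<dots> = coeff f (degree f) * coeff ((x_times ^^ degree f) g) (degree g + degree f)"
    by (subst sum.remove[of _ "degree f"], simp_all, rule sum.neutral)
      (use top coeff_eq_0[of g] in auto)
  finally show ?thesis
    using top coeff_eq_0[of g] by simp
qed

lemma degree_ore_mult:
  assumes "f \<noteq> 0" "g \<noteq> 0"
  shows "f \<star> g \<noteq> 0" "degree (f \<star> g) = degree f + degree g"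
proof -
  have top: "coeff (f \<star> g) (degree f + degree g) \<noteq> 0"
    using assms by (simp add: coeff_ore_mult_top)
  then show "f \<star> g \<noteq> 0"
    by auto
  show "degree (f \<star> g) = degree f + degree g"
    using top le_degree degree_le[of "degree f + degree g"] coeff_ore_mult_above
    by (meson le_antisym)
qed

lemma ore_pow_commute: "P ^\<star> k \<star> P = P \<star> P ^\<star> k"
  by (induction k) (simp_all add: ore_mult_1_left ore_mult_1_right ore_mult_assoc)

lemma degree_ore_pow:
  "P \<noteq> 0 \<Longrightarrow> P ^\<star> k \<noteq> 0 \<and> degree (P ^\<star> k) = k * degree P"
  by (induction k) (simp_all add: degree_ore_mult)

lemma lead_coeff_commuting:
  assumes "f \<star> g = g \<star> f"
  shows "lead_coeff f * (\<sigma> ^^ degree f) (lead_coeff g) = lead_coeff g * (\<sigma> ^^ degree g) (lead_coeff f)"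
  using coeff_ore_mult_top[of f g] coeff_ore_mult_top[of g f] assms
  by (simp add: add.commute)

lemma degree_twisted_solution:
  assumes "p \<noteq> 0" "w \<noteq> 0" "p * (\<sigma> ^^ n) w = w * (\<sigma> ^^ m) p"
  shows "degree p + degree (\<sigma> [:0, 1:]) ^ n * degree w = degree w + degree (\<sigma> [:0, 1:]) ^ m * degree p"
  using arg_cong[OF assms(3), of degree] assms(1,2)
  by (simp add: degree_mult_eq degree_funpow_sigma)

text \<open>The only place where \<open>deg \<sigma>(y) > 1\<close> matters: for \<open>\<sigma> = id\<close> every \<open>w\<close> is a solution.\<close>
lemma twisted_solutions_proportional:
  assumes "degree (\<sigma> [:0, 1:]) > 1" "n \<ge> 1" "p \<noteq> 0" "w1 \<noteq> 0" "w2 \<noteq> 0"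
    and w1: "p * (\<sigma> ^^ n) w1 = w1 * (\<sigma> ^^ m) p"
    and w2: "p * (\<sigma> ^^ n) w2 = w2 * (\<sigma> ^^ m) p"
  shows "\<exists>c. w1 = smult c w2"
proof -
  have "degree (\<sigma> [:0, 1:]) ^ n > 1"
    using assms(1,2) by (intro one_less_power) auto
  note same_degree = linear_nat_solution_unique[OF this]
  have deg_w1: "degree w1 = degree w2"
    using same_degree degree_twisted_solution[OF \<open>p \<noteq> 0\<close> \<open>w1 \<noteq> 0\<close> w1]
      degree_twisted_solution[OF \<open>p \<noteq> 0\<close> \<open>w2 \<noteq> 0\<close> w2] by blast
  define c where "c = lead_coeff w1 / lead_coeff w2"
  define w where "w = w1 - smult c w2"
  have w: "p * (\<sigma> ^^ n) w = w * (\<sigma> ^^ m) p"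
    using w1 w2 by (simp add: w_def funpow_sigma_diff funpow_sigma_smult algebra_simps)
  have "w = 0"
  proof (rule ccontr)
    assume "w \<noteq> 0"
    then have "degree w = degree w1"
      using same_degree degree_twisted_solution[OF \<open>p \<noteq> 0\<close> \<open>w \<noteq> 0\<close> w]
        degree_twisted_solution[OF \<open>p \<noteq> 0\<close> \<open>w1 \<noteq> 0\<close> w1] by blast
    moreover have "coeff w (degree w1) = 0"
      using \<open>w2 \<noteq> 0\<close> deg_w1 by (simp add: w_def c_def)
    ultimately show False
      using \<open>w \<noteq> 0\<close> by (metis leading_coeff_0_iff)
  qed
  then show ?thesis
    unfolding w_def by auto
qed

lemma zero_in_K_poly_in: "0 \<in> K_poly_in \<sigma> \<delta> P"
  unfolding K_poly_in_def by (auto intro!: exI[of _ "\<lambda>_. 0"])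

lemma K_poly_in_add_const_pow:
  assumes "Q \<in> K_poly_in \<sigma> \<delta> P"
  shows "Q + smult [:c:] (P ^\<star> k) \<in> K_poly_in \<sigma> \<delta> P"
proof -
  obtain a N where Q: "Q = (\<Sum>i\<le>N. smult [:a i:] (P ^\<star> i))"
    using assms unfolding K_poly_in_def by blast
  define N' where "N' = max N k"
  define a' where "a' i = (if i \<le> N then a i else 0) + (if i = k then c else 0)" for i
  have "(\<Sum>i\<le>N'. smult [:a' i:] (P ^\<star> i))
      = (\<Sum>i\<le>N'. if i \<le> N then smult [:a i:] (P ^\<star> i) else 0)
      + (\<Sum>i\<le>N'. if i = k then smult [:c:] (P ^\<star> i) else 0)"
    unfolding sum.distrib[symmetric]
    by (rule sum.cong) (auto simp: a'_def smult_add_left[symmetric])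
  also have "\<dots> = Q + smult [:c:] (P ^\<star> k)"
    unfolding Q by (subst sum.mono_neutral_cong_right[of "{..N'}" "{..N}"]) (auto simp: N'_def)
  finally have "Q + smult [:c:] (P ^\<star> k) = (\<Sum>i\<le>N'. smult [:a' i:] (P ^\<star> i))" ..
  then show ?thesis
    unfolding K_poly_in_def by blast
qed

lemma K_poly_in_subset_centralizer: "K_poly_in \<sigma> \<delta> P \<subseteq> centralizer \<sigma> \<delta> P"
  by (auto simp: K_poly_in_def centralizer_def ore_mult_sum_left ore_mult_sum_right
      ore_mult_smult_left ore_mult_const_right ore_pow_commute)

lemma centralizer_diff_const_pow:
  "Q \<in> centralizer \<sigma> \<delta> P \<Longrightarrow> Q - smult [:c:] (P ^\<star> k) \<in> centralizer \<sigma> \<delta> P"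
  by (simp add: centralizer_def ore_mult_diff_left ore_mult_diff_right
      ore_mult_smult_left ore_mult_const_right ore_pow_commute ore_mult_assoc)

lemma centralizer_reduce_degree:
  assumes "degree (\<sigma> [:0, 1:]) > 1" "degree P \<ge> 1"
    and Q: "Q \<in> centralizer \<sigma> \<delta> P" "Q \<noteq> 0" "degree Q = k * degree P"
  obtains c where "Q - smult [:c:] (P ^\<star> k) = 0 \<or> degree (Q - smult [:c:] (P ^\<star> k)) < degree Q"
proof -
  have "P \<noteq> 0"
    using assms(2) by auto
  then have R: "P ^\<star> k \<noteq> 0" "degree (P ^\<star> k) = degree Q"
    using degree_ore_pow[of P k] Q(3) by auto
  have "P ^\<star> k \<in> centralizer \<sigma> \<delta> P"
    by (simp add: centralizer_def ore_pow_commute)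
  then have "lead_coeff P * (\<sigma> ^^ degree P) (lead_coeff (P ^\<star> k))
      = lead_coeff (P ^\<star> k) * (\<sigma> ^^ degree Q) (lead_coeff P)"
    using R lead_coeff_commuting[of P "P ^\<star> k"] by (simp add: centralizer_def)
  moreover have "lead_coeff P * (\<sigma> ^^ degree P) (lead_coeff Q)
      = lead_coeff Q * (\<sigma> ^^ degree Q) (lead_coeff P)"
    using Q(1) lead_coeff_commuting[of P Q] by (simp add: centralizer_def)
  ultimately obtain c where c: "lead_coeff Q = smult c (lead_coeff (P ^\<star> k))"
    using twisted_solutions_proportional[OF assms(1,2), of "lead_coeff P" "lead_coeff Q"
        "lead_coeff (P ^\<star> k)" "degree Q"]
      \<open>P \<noteq> 0\<close> Q(2) R(1) by auto
  define Q' where "Q' = Q - smult [:c:] (P ^\<star> k)"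
  have "degree Q' \<le> degree Q"
    using R by (simp add: Q'_def degree_diff_le degree_smult_le le_trans)
  moreover have "coeff Q' (degree Q) = 0"
    using c R by (simp add: Q'_def)
  ultimately have "Q' = 0 \<or> degree Q' < degree Q"
    by (metis leading_coeff_0_iff le_neq_implies_less)
  then show thesis
    using that unfolding Q'_def by blast
qed

lemma centralizer_subset_K_poly_in:
  assumes "degree (\<sigma> [:0, 1:]) > 1" "degree P \<ge> 1"
    and dvd: "\<forall>Q \<in> centralizer \<sigma> \<delta> P. Q \<noteq> 0 \<longrightarrow> degree P dvd degree Q"
  shows "Q \<in> centralizer \<sigma> \<delta> P \<Longrightarrow> Q \<in> K_poly_in \<sigma> \<delta> P"
proof (induction "degree Q" arbitrary: Q rule: less_induct)
  case less
  show ?case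
  proof (cases "Q = 0")
    case False
    then obtain k where "degree Q = k * degree P"
      using dvd less.prems by (metis dvdE mult.commute)
    then obtain c where reduced: "Q - smult [:c:] (P ^\<star> k) = 0
        \<or> degree (Q - smult [:c:] (P ^\<star> k)) < degree Q"
      using centralizer_reduce_degree[OF assms(1,2) less.prems False] by blast
    have "Q - smult [:c:] (P ^\<star> k) \<in> K_poly_in \<sigma> \<delta> P"
      using reduced less.hyps centralizer_diff_const_pow[OF less.prems] zero_in_K_poly_in
      by auto
    from K_poly_in_add_const_pow[OF this, of c k] show ?thesis
      by simp
  qed (simp add: zero_in_K_poly_in)
qed

end

theorem lemma5p2:
  fixes \<sigma> \<delta> :: "'k::field poly \<Rightarrow> 'k poly" and P :: "'k poly poly" and n :: nat
  assumes "K_alg_endo \<sigma>"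
    and "degree (\<sigma> [:0, 1:]) > 1"
    and "K_sigma_derivation \<sigma> \<delta>"
    and "degree P = n" and "n \<ge> 1"
    and "\<forall>Q \<in> centralizer \<sigma> \<delta> P. Q \<noteq> 0 \<longrightarrow> n dvd degree Q"
  shows "centralizer \<sigma> \<delta> P = K_poly_in \<sigma> \<delta> P"
proof -
  interpret ore_extension \<sigma> \<delta>
    using assms(1-3) by unfold_locales simp_all
  show ?thesis
    using K_poly_in_subset_centralizer centralizer_subset_K_poly_in[OF assms(2)] assms(4-6)
    by blast
qed

end
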